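(* Consider a procedure with body $s_1; \ldots; s_n$, and let $\Lambda, \Upsilon, \mathit{true} \vdash s_i; \ldots; s_n : \Phi_{\mathrm{safe}}$ be the inferred safety condition for the suffix starting at $s_i$. Suppose the technique adds the statement $\mathtt{assume}\ \Phi$ (with $\Phi = \neg\Phi_{\mathrm{safe}}$) before $s_i; \ldots; s_n$. Then $\Phi$ is a necessary condition for $s_i; \ldots; s_n$ to have an assertion violation.
   Context: Programs are in an imperative language with assignments, heap reads/writes, $\mathtt{malloc}$, procedure calls, $\mathtt{assert}\ p$, $\mathtt{assume}\ p$ and nondeterministic conditionals; execution stops at the first assertion or assumption violation, and an execution is failing iff it ends in an assertion violation. The judgment $\Lambda,\Upsilon,\Phi \vdash s : \Phi'$ denotes a lightweight backward safety-condition inference (using an aliasing/side-effect oracle $\Lambda$ and a procedure-summary environment $\Upsilon$) that is sound in the sense that $\Phi' \Rightarrow \mathit{wp}(s,\Phi)$ for terminating $s$ (with $\mathtt{assert}\ p$ giving $p\wedge\Phi$ and $\mathtt{assume}\ p$ giving $p\Rightarrow\Phi$). Program trimming (intraprocedural instrumentation) inserts $\mathtt{assume}\ \neg\Phi_{\mathrm{safe}}$ right before $s_i$, where $\Phi_{\mathrm{safe}}$ is the safety condition inferred for $s_i;\ldots;s_n$ from postcondition $\mathit{true}$. *)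

theory Defs
  imports Main
begin

type_synonym var = string
type_synonym pname = string
type_synonym addr = int
type_synonym val = int

record state =
  store :: "var \<Rightarrow> val"
  heap  :: "addr \<Rightarrow> val option"

type_synonym expr = "state \<Rightarrow> val"
type_synonym pred = "state \<Rightarrow> bool"

datatype com =
    Skip
  | Assign var expr
  | Read var expr                   (* x := *e *)
  | Write expr expr                 (* *e1 := e2 *)
  | Malloc var
  | Call pname
  | Assert pred
  | Assume pred
  | Seq com com
  | Choice com com                  (* if * then s1 else s2 *)

datatype outcome = Normal state | AssertFail | AssumeFail

text \<open>Big-step semantics relative to a procedure environment (bodies).
  Heap accesses to unallocated addresses block (they are not failures).\<close>
inductive exec :: "(pname \<Rightarrow> com) \<Rightarrow> com \<Rightarrow> state \<Rightarrow> outcome \<Rightarrow> bool"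
  for \<Gamma> :: "pname \<Rightarrow> com" where
  Skip: "exec \<Gamma> Skip \<sigma> (Normal \<sigma>)"
| Assign: "exec \<Gamma> (Assign x e) \<sigma> (Normal (\<sigma>\<lparr>store := (store \<sigma>)(x := e \<sigma>)\<rparr>))"
| Read: "heap \<sigma> (e \<sigma>) = Some v \<Longrightarrow>
     exec \<Gamma> (Read x e) \<sigma> (Normal (\<sigma>\<lparr>store := (store \<sigma>)(x := v)\<rparr>))"
| Write: "heap \<sigma> (e1 \<sigma>) \<noteq> None \<Longrightarrow>
     exec \<Gamma> (Write e1 e2) \<sigma> (Normal (\<sigma>\<lparr>heap := (heap \<sigma>)(e1 \<sigma> := Some (e2 \<sigma>))\<rparr>))"
| Malloc: "heap \<sigma> a = None \<Longrightarrow>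
     exec \<Gamma> (Malloc x) \<sigma>
       (Normal (\<sigma>\<lparr>store := (store \<sigma>)(x := a), heap := (heap \<sigma>)(a := Some v)\<rparr>))"
| Call: "exec \<Gamma> (\<Gamma> p) \<sigma> r \<Longrightarrow> exec \<Gamma> (Call p) \<sigma> r"
| AssertT: "p \<sigma> \<Longrightarrow> exec \<Gamma> (Assert p) \<sigma> (Normal \<sigma>)"
| AssertF: "\<not> p \<sigma> \<Longrightarrow> exec \<Gamma> (Assert p) \<sigma> AssertFail"
| AssumeT: "p \<sigma> \<Longrightarrow> exec \<Gamma> (Assume p) \<sigma> (Normal \<sigma>)"
| AssumeF: "\<not> p \<sigma> \<Longrightarrow> exec \<Gamma> (Assume p) \<sigma> AssumeFail"
| SeqN: "exec \<Gamma> s1 \<sigma> (Normal \<sigma>') \<Longrightarrow> exec \<Gamma> s2 \<sigma>' r \<Longrightarrow> exec \<Gamma> (Seq s1 s2) \<sigma> r"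
| SeqF: "exec \<Gamma> s1 \<sigma> r \<Longrightarrow> r = AssertFail \<or> r = AssumeFail \<Longrightarrow>
     exec \<Gamma> (Seq s1 s2) \<sigma> r"
| ChoiceL: "exec \<Gamma> s1 \<sigma> r \<Longrightarrow> exec \<Gamma> (Choice s1 s2) \<sigma> r"
| ChoiceR: "exec \<Gamma> s2 \<sigma> r \<Longrightarrow> exec \<Gamma> (Choice s1 s2) \<sigma> r"

definition wp :: "(pname \<Rightarrow> com) \<Rightarrow> com \<Rightarrow> pred \<Rightarrow> pred" where
  "wp \<Gamma> s \<Phi> \<sigma> \<longleftrightarrow>
     (\<forall>r. exec \<Gamma> s \<sigma> r \<longrightarrow> r \<noteq> AssertFail \<and> (\<forall>\<tau>. r = Normal \<tau> \<longrightarrow> \<Phi> \<tau>))"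

fun seq_list :: "com list \<Rightarrow> com" where
  "seq_list [] = Skip"
| "seq_list [s] = s"
| "seq_list (s # ss) = Seq s (seq_list ss)"

text \<open>Soundness of a safety-condition inference judgment
  infer Lambda Upsilon Phi s Phi'  (i.e. Lambda,Upsilon,Phi |- s : Phi'),
  as assumed in the paper: Phi' implies wp(s, Phi).\<close>
definition sound_inference ::
  "(pname \<Rightarrow> com) \<Rightarrow> ('l \<Rightarrow> 'u \<Rightarrow> pred \<Rightarrow> com \<Rightarrow> pred \<Rightarrow> bool) \<Rightarrow> bool" where
  "sound_inference \<Gamma> infer \<longleftrightarrow>
     (\<forall>\<Lambda> \<Upsilon> \<Phi> s \<Phi>'. infer \<Lambda> \<Upsilon> \<Phi> s \<Phi>' \<longrightarrow> (\<forall>\<sigma>. \<Phi>' \<sigma> \<longrightarrow> wp \<Gamma> s \<Phi> \<sigma>))"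

definition trim :: "pred \<Rightarrow> com \<Rightarrow> com" where
  "trim \<Phi>safe s = Seq (Assume (\<lambda>\<sigma>. \<not> \<Phi>safe \<sigma>)) s"

end

theory Submission
  imports Defs
begin

lemma wp_not_AssertFail: "wp \<Gamma> s \<Phi> \<sigma> \<Longrightarrow> \<not> exec \<Gamma> s \<sigma> AssertFail"
  unfolding wp_def by blast

lemma sound_inference_wp:
  assumes "sound_inference \<Gamma> infer" and "infer \<Lambda> \<Upsilon> \<Phi> s \<Phi>'" and "\<Phi>' \<sigma>"
  shows "wp \<Gamma> s \<Phi> \<sigma>"
  using assms unfolding sound_inference_def by blast

lemma sound_inference_AssertFail_imp_not_safe:
  assumes "sound_inference \<Gamma> infer" and "infer \<Lambda> \<Upsilon> \<Phi> s \<Phi>safe"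
    and "exec \<Gamma> s \<sigma> AssertFail"
  shows "\<not> \<Phi>safe \<sigma>"
  using assms sound_inference_wp wp_not_AssertFail by metis

theorem theorem5p1:
  fixes \<Gamma> :: "pname \<Rightarrow> com"
    and infer :: "'l \<Rightarrow> 'u \<Rightarrow> pred \<Rightarrow> com \<Rightarrow> pred \<Rightarrow> bool"
    and \<Lambda> :: 'l and \<Upsilon> :: 'u
    and body :: "com list" and i :: nat
    and \<Phi>safe \<Phi> :: pred
  assumes sound: "sound_inference \<Gamma> infer"
    and idx: "1 \<le> i" "i \<le> length body"
    and inf: "infer \<Lambda> \<Upsilon> (\<lambda>_. True) (seq_list (drop (i - 1) body)) \<Phi>safe"
    and phi: "\<Phi> = (\<lambda>\<sigma>. \<not> \<Phi>safe \<sigma>)"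
  shows "\<forall>\<sigma>. exec \<Gamma> (seq_list (drop (i - 1) body)) \<sigma> AssertFail \<longrightarrow> \<Phi> \<sigma>"
  using sound_inference_AssertFail_imp_not_safe [OF sound inf] phi by blast

end
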